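(* Suppose $L$ is a linear order with a first element such that $L/\!\sim_\omega\;\cong 1$ and $\operatorname{cf}(L)=\omega_1$, and suppose $L$ has a strictly increasing cofinal sequence $\langle x_\alpha:\alpha<\omega_1\rangle$ with $L=\bigcup_{\alpha<\omega_1}[x_\alpha,x_{\alpha+1})$. Then $L$ is isomorphic to a suborder of $U$.
   Context: The countable condensation $\sim_\omega$ on a linear order $L$: $x\sim_\omega y$ iff the closed interval between $x$ and $y$ is countable; $L/\!\sim_\omega\;\cong 1$ means all elements of $L$ are mutually $\sim_\omega$-equivalent. $\operatorname{cf}(L)$ is the least length of a strictly increasing cofinal sequence in $L$. $U$ is the linear order $R^*+\mathbb{Q}+R$, where $R$ is obtained from $\omega_1$ by replacing each $\alpha<\omega_1$ with a point $u_\alpha$ followed by a copy $\mathbb{Q}(\alpha)$ of the rationals (so $u_\alpha<\mathbb{Q}(\alpha)<u_{\alpha+1}$), $R^*$ is the reverse of $R$, and the middle summand is a copy of the rationals. *)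

theory Defs
  imports Main "HOL-Library.Countable_Set"
begin

text \<open>The type 'w is (an isomorphic copy of) omega_1: an uncountable well-order
  all of whose proper initial segments are countable.\<close>
definition omega1_type :: "'w::wellorder itself \<Rightarrow> bool" where
  "omega1_type _ \<longleftrightarrow> uncountable (UNIV :: 'w set) \<and> (\<forall>w::'w. countable {..<w})"

definition wsucc :: "'w::wellorder \<Rightarrow> 'w" where
  "wsucc w = (LEAST v. w < v)"

text \<open>Countable condensation is trivial: all elements mutually equivalent.\<close>
definition cc_trivial :: "'a::linorder itself \<Rightarrow> bool" where
  "cc_trivial _ \<longleftrightarrow> (\<forall>x y::'a. countable {min x y..max x y})"

definition has_first :: "'a::linorder itself \<Rightarrow> bool" where
  "has_first _ \<longleftrightarrow> (\<exists>m::'a. \<forall>x. m \<le> x)"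

definition cofinal_in :: "'a::linorder set \<Rightarrow> bool" where
  "cofinal_in S \<longleftrightarrow> (\<forall>y. \<exists>s\<in>S. y \<le> s)"

text \<open>cf(L) = omega_1 (ordinals are indexed by the omega_1 type 'w: the ordinals
  below omega_1 are the order types of the initial segments {..<w}):
  there is a strictly increasing cofinal sequence of length omega_1, and none of
  any length alpha < omega_1.\<close>
definition cf_is_omega1 :: "'w::wellorder itself \<Rightarrow> 'a::linorder itself \<Rightarrow> bool" where
  "cf_is_omega1 _ _ \<longleftrightarrow>
     (\<exists>s::'w \<Rightarrow> 'a. strict_mono s \<and> cofinal_in (range s)) \<and>
     \<not> (\<exists>(w::'w) (s::'w \<Rightarrow> 'a). strict_mono_on {..<w} s \<and> cofinal_in (s ` {..<w}))"

text \<open>The order R: omega_1 with each alpha replaced by u_alpha (= (alpha, None))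
  followed by a copy of Q (= (alpha, Some q)).\<close>
definition R_less :: "('w::wellorder \<times> rat option) \<Rightarrow> ('w \<times> rat option) \<Rightarrow> bool" where
  "R_less p q \<longleftrightarrow> fst p < fst q \<or>
     (fst p = fst q \<and> ((snd p = None \<and> snd q \<noteq> None) \<or>
        (\<exists>a b. snd p = Some a \<and> snd q = Some b \<and> a < b)))"

text \<open>U = R* + Q + R.\<close>
datatype 'w U_elt = ULeft "'w \<times> rat option" | UMid rat | URight "'w \<times> rat option"

fun U_less :: "'w::wellorder U_elt \<Rightarrow> 'w U_elt \<Rightarrow> bool" where
  "U_less (ULeft r) (ULeft r') \<longleftrightarrow> R_less r' r"
| "U_less (ULeft _) (UMid _) \<longleftrightarrow> True"
| "U_less (ULeft _) (URight _) \<longleftrightarrow> True"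
| "U_less (UMid q) (UMid q') \<longleftrightarrow> q < q'"
| "U_less (UMid _) (URight _) \<longleftrightarrow> True"
| "U_less (URight r) (URight r') \<longleftrightarrow> R_less r r'"
| "U_less _ _ \<longleftrightarrow> False"

definition embeds_in_U :: "'w::wellorder itself \<Rightarrow> 'a::linorder itself \<Rightarrow> bool" where
  "embeds_in_U _ _ \<longleftrightarrow> (\<exists>f :: 'a \<Rightarrow> 'w U_elt. \<forall>x y. x < y \<longleftrightarrow> U_less (f x) (f y))"

end

theory Submission
  imports Defs Complex_Main
begin

text \<open>
  The intervals \<open>[x\<^sub>\<alpha>, x\<^sub>\<alpha>\<^sub>+\<^sub>1)\<close> partition \<open>L\<close> into consecutive blocks, and each block is
  countable because \<open>L/\<sim>\<^sub>\<omega> \<cong> 1\<close>. A countable linear order embeds into \<open>\<rat>\<close>; sending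
  each \<open>y\<close> of block \<open>\<alpha>\<close> to its image under such an embedding, placed in the copy \<open>\<rat>(\<alpha>)\<close>,
  embeds \<open>L\<close> lexicographically into \<open>R\<close>, the right summand of \<open>U\<close>.
\<close>

lemma suminf_half_powers_insert_le:
  fixes A B :: "nat set"
  assumes "n \<notin> A" and "insert n A \<subseteq> B"
  shows "(\<Sum>i. of_bool (i \<in> A) * (1/2::real)^i) + (1/2)^n \<le> (\<Sum>i. of_bool (i \<in> B) * (1/2::real)^i)"
proof -
  have summable: "summable (\<lambda>i. of_bool (i \<in> C) * (1/2::real)^i)" for C :: "nat set"
    by (rule summable_comparison_test[where g="\<lambda>i. (1/2::real)^i"])
       (auto simp: summable_geometric)
  have "(\<lambda>i. of_bool (i \<in> A) * (1/2::real)^i + (if i = n then (1/2)^i else 0))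
          sums ((\<Sum>i. of_bool (i \<in> A) * (1/2::real)^i) + (1/2)^n)"
    by (intro sums_add summable_sums summable sums_single)
  moreover have "of_bool (i \<in> A) * (1/2::real)^i + (if i = n then (1/2)^i else 0)
                   \<le> of_bool (i \<in> B) * (1/2)^i" for i
    using assms by auto
  ultimately show ?thesis
    by (intro sums_le[OF _ _ summable_sums[OF summable]])
qed

text \<open>
  With an injection \<open>k : S \<rightarrow> \<nat>\<close>, the weight \<open>g y\<close> of \<open>y\<close> is the sum of \<open>(1/2)^k z\<close> over
  \<open>z < y\<close> in \<open>S\<close>. Then \<open>g y + (1/2)^k y \<le> g z\<close> whenever \<open>y < z\<close>, so a rational chosen in
  \<open>(g y, g y + (1/2)^k y)\<close> still depends strictly monotonically on \<open>y\<close>.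
\<close>
lemma countable_strict_mono_on_rat:
  fixes S :: "'a::linorder set"
  assumes "countable S"
  obtains h :: "'a \<Rightarrow> rat" where "strict_mono_on S h"
proof -
  define k where "k = to_nat_on S"
  have inj_k: "inj_on k S"
    unfolding k_def using assms by (rule inj_on_to_nat_on)
  define g where "g y = (\<Sum>i. of_bool (i \<in> k ` {z\<in>S. z < y}) * (1/2::real)^i)" for y
  have gap: "g y + (1/2)^(k y) \<le> g z" if "y \<in> S" "z \<in> S" "y < z" for y z
  proof -
    have "k y \<notin> k ` {w\<in>S. w < y}"
      using inj_k \<open>y \<in> S\<close> by (auto simp: inj_on_eq_iff)
    moreover have "insert (k y) (k ` {w\<in>S. w < y}) \<subseteq> k ` {w\<in>S. w < z}"
      using that by auto
    ultimately show ?thesis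
      unfolding g_def by (rule suminf_half_powers_insert_le)
  qed
  have "\<forall>y. \<exists>q. g y < of_rat q \<and> of_rat q < g y + (1/2)^(k y)"
    by (intro allI of_rat_dense) simp
  then obtain h where h: "\<And>y. g y < of_rat (h y) \<and> of_rat (h y) < g y + (1/2)^(k y)"
    by metis
  have "h y < h z" if "y \<in> S" "z \<in> S" "y < z" for y z
  proof -
    have "of_rat (h y) < (of_rat (h z) :: real)"
      using gap[OF that] h[of y] h[of z] by linarith
    then show ?thesis
      by (simp add: of_rat_less)
  qed
  then show thesis
    by (intro that strict_mono_onI)
qed

lemma wsucc_le: "v < w \<Longrightarrow> wsucc v \<le> w"
  unfolding wsucc_def by (rule Least_le)

lemma block_index_mono:
  fixes x :: "'w::wellorder \<Rightarrow> 'a::linorder"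
  assumes "strict_mono x"
    and "y \<in> {x v ..< x (wsucc v)}" and "z \<in> {x w ..< x (wsucc w)}" and "y \<le> z"
  shows "v \<le> w"
proof (rule ccontr)
  assume "\<not> v \<le> w"
  then have "x (wsucc w) \<le> x v"
    using wsucc_le[of w v] assms(1) by (simp add: strict_mono_less_eq)
  with assms(2-4) show False
    by auto
qed

lemma obtain_block_index:
  fixes x :: "'w::wellorder \<Rightarrow> 'a::linorder"
  assumes "strict_mono x" and cover: "(UNIV :: 'a set) = (\<Union>\<alpha>. {x \<alpha> ..< x (wsucc \<alpha>)})"
  obtains idx :: "'a \<Rightarrow> 'w"
  where "\<And>y. y \<in> {x (idx y) ..< x (wsucc (idx y))}" and "\<And>y z. y < z \<Longrightarrow> idx y \<le> idx z"
proof -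
  define idx where "idx y = (SOME \<alpha>. y \<in> {x \<alpha> ..< x (wsucc \<alpha>)})" for y
  have in_block: "y \<in> {x (idx y) ..< x (wsucc (idx y))}" for y
  proof -
    have "\<exists>\<alpha>. y \<in> {x \<alpha> ..< x (wsucc \<alpha>)}"
      using cover by blast
    then show ?thesis
      unfolding idx_def by (rule someI_ex)
  qed
  moreover have "idx y \<le> idx z" if "y < z" for y z
    using block_index_mono[OF \<open>strict_mono x\<close> in_block in_block less_imp_le[OF that]] .
  ultimately show thesis
    by (rule that)
qed

lemma countable_interval_if_cc_trivial:
  assumes "cc_trivial TYPE('a::linorder)"
  shows "countable {a::'a ..< b}"
proof (rule countable_subset)
  show "{a..<b} \<subseteq> {min a b..max a b}"
    by auto
  show "countable {min a b..max a b}"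
    using assms unfolding cc_trivial_def by blast
qed

lemma R_less_Some_iff: "R_less (v, Some p) (w, Some q) \<longleftrightarrow> v < w \<or> v = w \<and> p < q"
  by (auto simp: R_less_def)

lemma R_less_asym: "R_less p q \<Longrightarrow> \<not> R_less q p"
  by (auto simp: R_less_def)

lemma strict_mono_iff_if_asym:
  fixes f :: "'a::linorder \<Rightarrow> 'b"
  assumes mono: "\<And>y z. y < z \<Longrightarrow> r (f y) (f z)" and asym: "\<And>p q. r p q \<Longrightarrow> \<not> r q p"
  shows "y < z \<longleftrightarrow> r (f y) (f z)"
  using mono asym[of "f y" "f y"] asym[OF mono[of z y]] by (cases y z rule: linorder_cases) auto

lemma lex_embedding_into_R:
  fixes idx :: "'a::linorder \<Rightarrow> 'w::wellorder" and h :: "'a \<Rightarrow> rat"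
  assumes "\<And>y z. y < z \<Longrightarrow> idx y \<le> idx z"
    and "\<And>y z. y < z \<Longrightarrow> idx y = idx z \<Longrightarrow> h y < h z"
  shows "y < z \<longleftrightarrow> R_less (idx y, Some (h y)) (idx z, Some (h z))"
proof (rule strict_mono_iff_if_asym[where f = "\<lambda>y. (idx y, Some (h y))"])
  show "R_less (idx y, Some (h y)) (idx z, Some (h z))" if "y < z" for y z
    using assms[OF that] by (auto simp: R_less_Some_iff order.order_iff_strict)
qed (rule R_less_asym)

theorem proposition3p12:
  assumes "omega1_type TYPE('w::wellorder)"
    and "has_first TYPE('a::linorder)"
    and "cc_trivial TYPE('a)"
    and "cf_is_omega1 TYPE('w) TYPE('a)"
    and "\<exists>x::'w \<Rightarrow> 'a. strict_mono x \<and> cofinal_in (range x) \<and>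
           (UNIV :: 'a set) = (\<Union>\<alpha>. {x \<alpha> ..< x (wsucc \<alpha>)})"
  shows "embeds_in_U TYPE('w) TYPE('a)"
proof -
  obtain x :: "'w \<Rightarrow> 'a" where "strict_mono x"
    and cover: "(UNIV :: 'a set) = (\<Union>\<alpha>. {x \<alpha> ..< x (wsucc \<alpha>)})"
    using assms(5) by blast
  obtain idx where in_block: "\<And>y. y \<in> {x (idx y) ..< x (wsucc (idx y))}"
    and idx_mono: "\<And>y z. y < z \<Longrightarrow> idx y \<le> idx z"
    using obtain_block_index[OF \<open>strict_mono x\<close> cover] by blast
  have "\<exists>h :: 'a \<Rightarrow> rat. strict_mono_on {x \<alpha> ..< x (wsucc \<alpha>)} h" for \<alpha>
    using countable_strict_mono_on_rat[OF countable_interval_if_cc_trivial[OF assms(3)]] by blast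
  then obtain H :: "'w \<Rightarrow> 'a \<Rightarrow> rat"
    where H: "\<And>\<alpha>. strict_mono_on {x \<alpha> ..< x (wsucc \<alpha>)} (H \<alpha>)"
    by metis
  have "y < z \<longleftrightarrow> R_less (idx y, Some (H (idx y) y)) (idx z, Some (H (idx z) z))" for y z
  proof (rule lex_embedding_into_R[OF idx_mono])
    show "H (idx y) y < H (idx z) z" if "y < z" and "idx y = idx z" for y z
      using strict_mono_onD[OF H in_block[of y] _ \<open>y < z\<close>] in_block[of z] \<open>idx y = idx z\<close>
      by simp
  qed
  then show ?thesis
    unfolding embeds_in_U_def by (intro exI[of _ "\<lambda>y. URight (idx y, Some (H (idx y) y))"]) simp
qed

end
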